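(* Let $n\geq2$. As $E$-modules, $\tilde{H}^\ast(BSO(2n))\cong\tilde{H}^\ast(BSO(2n-1))\oplus\tilde{H}^\ast(MSO_{2n})$, where $MSO_{2n}$ is the Thom space of the universal oriented $2n$-plane bundle over $BSO(2n)$.
   Context: Cohomology is with $\mathbb{Z}/2$ coefficients. $E=\mathbb{Z}/2\langle Q_0,Q_1\rangle$ is the exterior subalgebra of the mod 2 Steenrod algebra generated by the Milnor primitives $Q_0=Sq^1$ and $Q_1=Sq^3+Sq^2Sq^1$, acting on cohomology via Steenrod operations. $H^\ast(BSO(m))=\mathbb{Z}/2[\widehat{\omega_2},\dots,\widehat{\omega_m}]$ with $\widehat{\omega_i}$ the Stiefel–Whitney classes. *)

theory Defs
  imports Main "HOL-Library.Poly_Mapping" "HOL-Library.Z2"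
begin

text \<open>Polynomials over Z/2 in variables w_i (i a natural number); a monomial is a
  finitely supported exponent function nat to nat.\<close>

type_synonym mono = "nat \<Rightarrow>\<^sub>0 nat"
type_synonym zpoly = "mono \<Rightarrow>\<^sub>0 bit"

definition var :: "nat \<Rightarrow> zpoly" where
  "var i = Poly_Mapping.single (Poly_Mapping.single i 1) 1"

definition const :: "bit \<Rightarrow> zpoly" where
  "const c = Poly_Mapping.single 0 c"

definition mdeg :: "mono \<Rightarrow> nat" where
  "mdeg m = (\<Sum>i\<in>Poly_Mapping.keys m. i * Poly_Mapping.lookup m i)"

definition homog :: "nat \<Rightarrow> zpoly \<Rightarrow> bool" where
  "homog d p \<longleftrightarrow> (\<forall>m\<in>Poly_Mapping.keys p. mdeg m = d)"

definition hpart :: "nat \<Rightarrow> zpoly \<Rightarrow> zpoly" where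
  "hpart d p = (\<Sum>m\<in>{m\<in>Poly_Mapping.keys p. mdeg m = d}. Poly_Mapping.single m (Poly_Mapping.lookup p m))"

definition subst :: "(nat \<Rightarrow> zpoly) \<Rightarrow> zpoly \<Rightarrow> zpoly" where
  "subst f p = (\<Sum>m\<in>Poly_Mapping.keys p. const (Poly_Mapping.lookup p m) * (\<Prod>i\<in>Poly_Mapping.keys m. f i ^ Poly_Mapping.lookup m i))"

text \<open>H^*(BSO(N)) = Z/2[w_2,...,w_N]: polynomials in the variables 2..N\<close>
definition HBSO :: "nat \<Rightarrow> zpoly set" where
  "HBSO N = {p. \<forall>m\<in>Poly_Mapping.keys p. Poly_Mapping.keys m \<subseteq> {2..N}}"

text \<open>reduced cohomology: no constant term (positive degree part)\<close>
definition rHBSO :: "nat \<Rightarrow> zpoly set" where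
  "rHBSO N = {p \<in> HBSO N. 0 \<notin> Poly_Mapping.keys p}"

text \<open>Stiefel-Whitney class w_i of the universal bundle over BSO(N):
  w_0 = 1, w_1 = 0 (oriented), w_i = 0 for i > N\<close>
definition sw :: "nat \<Rightarrow> nat \<Rightarrow> zpoly" where
  "sw N i = (if i = 0 then 1 else if i = 1 \<or> N < i then 0 else var i)"

text \<open>Wu formula: Sq^k(w_m) = sum_{t=0}^k binom(m-k+t-1,t) w_{k-t} w_{m+t} (k \<le> m),
  and Sq^k(w_m) = 0 for k > m\<close>
definition SqW :: "nat \<Rightarrow> nat \<Rightarrow> nat \<Rightarrow> zpoly" where
  "SqW N k m = (if k \<le> m then
     (\<Sum>t\<le>k. of_nat ((m - k + t - 1) choose t) * sw N (k - t) * sw N (m + t)) else 0)"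

text \<open>total Steenrod square, a ring homomorphism by the Cartan formula\<close>
definition totSq :: "nat \<Rightarrow> zpoly \<Rightarrow> zpoly" where
  "totSq N = subst (\<lambda>m. \<Sum>k\<le>m. SqW N k m)"

definition Sq :: "nat \<Rightarrow> nat \<Rightarrow> zpoly \<Rightarrow> zpoly" where
  "Sq N k p = (\<Sum>d\<in>mdeg ` Poly_Mapping.keys p. hpart (d + k) (totSq N (hpart d p)))"

definition Q0 :: "nat \<Rightarrow> zpoly \<Rightarrow> zpoly" where
  "Q0 N p = Sq N 1 p"

definition Q1 :: "nat \<Rightarrow> zpoly \<Rightarrow> zpoly" where
  "Q1 N p = Sq N 3 p + Sq N 2 (Sq N 1 p)"

text \<open>Reduced cohomology of the Thom space MSO_N: the free H^*(BSO(N))-module on the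
  Thom class U (degree N); the element x represents x U (of degree deg x + N).
  Steenrod action: Sq^j U = w_j U and the Cartan formula,
  Sq^k(x U) = sum_{i+j=k} Sq^i(x) w_j U.\<close>
definition ThomSq :: "nat \<Rightarrow> nat \<Rightarrow> zpoly \<Rightarrow> zpoly" where
  "ThomSq N k x = (\<Sum>i\<le>k. Sq N i x * sw N (k - i))"

definition TQ0 :: "nat \<Rightarrow> zpoly \<Rightarrow> zpoly" where
  "TQ0 N x = ThomSq N 1 x"

definition TQ1 :: "nat \<Rightarrow> zpoly \<Rightarrow> zpoly" where
  "TQ1 N x = ThomSq N 3 x + ThomSq N 2 (ThomSq N 1 x)"

end

theory Submission
  imports Defs
begin

text \<open>
  Since \<open>w\<^bsub>2n\<^esub>\<close> is a polynomial generator, every class of \<open>H\<^sup>*(BSO(2n))\<close> splits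
  uniquely as \<open>a + w\<^bsub>2n\<^esub> b\<close> with \<open>a\<close> a polynomial in \<open>w\<^sub>2, \<dots>, w\<^bsub>2n-1\<^esub>\<close>; the
  second summand corresponds to the Thom class multiple \<open>b U\<close>, as \<open>w\<^bsub>2n\<^esub>\<close> is the mod 2
  Euler class. By the Cartan formula \<open>Q\<^sub>0\<close> and \<open>Q\<^sub>1\<close> are derivations, so it suffices to
  compare them on generators. By the Wu formula they agree with the operations of
  \<open>BSO(2n-1)\<close> on \<open>w\<^sub>2, \<dots>, w\<^bsub>2n-1\<^esub>\<close>, because every term containing \<open>w\<^bsub>2n\<^esub>\<close>
  carries an even binomial coefficient, while \<open>Q\<^sub>0 w\<^bsub>2n\<^esub> = 0\<close> and
  \<open>Q\<^sub>1 w\<^bsub>2n\<^esub> = w\<^sub>3 w\<^bsub>2n\<^esub>\<close>. This matches the Thom module, where \<open>Q\<^sub>0 U = w\<^sub>1 U = 0\<close>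
  and \<open>Q\<^sub>1 U = w\<^sub>3 U\<close>.
\<close>

section \<open>Polynomials over \<open>\<int>/2\<close> and substitution\<close>

declare bit_not_zero_iff [simp del] bit_not_one_iff [simp del]

lemma bit_add_self [simp]: "(x::bit) + x = 0"
  by (cases x) simp_all

lemma zpoly_add_self [simp]: "(p::zpoly) + p = 0"
  by (rule poly_mapping_eqI) (simp only: lookup_add bit_add_self lookup_zero)

lemma of_nat_zpoly: "(of_nat c :: zpoly) = (if even c then 0 else 1)"
proof (induction c)
  case (Suc c)
  then show ?case by (auto simp: add.commute[of 1] one_add_one)
qed simp

lemma of_nat_zpoly_even [simp]: "even c \<Longrightarrow> (of_nat c :: zpoly) = 0"
  by (simp add: of_nat_zpoly)

lemma poly_mapping_sum_single:
  "(p::'a \<Rightarrow>\<^sub>0 'b::comm_monoid_add) =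
     (\<Sum>m\<in>Poly_Mapping.keys p. Poly_Mapping.single m (Poly_Mapping.lookup p m))"
proof (rule poly_mapping_eqI)
  fix k
  have "Poly_Mapping.lookup (\<Sum>m\<in>Poly_Mapping.keys p. Poly_Mapping.single m (Poly_Mapping.lookup p m)) k
      = (\<Sum>m\<in>Poly_Mapping.keys p. if m = k then Poly_Mapping.lookup p m else 0)"
    by (simp add: lookup_sum lookup_single when_def)
  also have "\<dots> = Poly_Mapping.lookup p k"
    by (simp add: in_keys_iff)
  finally show "Poly_Mapping.lookup p k =
      Poly_Mapping.lookup (\<Sum>m\<in>Poly_Mapping.keys p. Poly_Mapping.single m (Poly_Mapping.lookup p m)) k"
    by simp
qed

lemma zpoly_induct [case_names zero single add]:
  fixes P :: "zpoly \<Rightarrow> bool"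
  assumes "P 0" "\<And>m c. P (Poly_Mapping.single m c)" "\<And>p q. P p \<Longrightarrow> P q \<Longrightarrow> P (p + q)"
  shows "P p"
proof -
  have "P (\<Sum>m\<in>S. Poly_Mapping.single m (Poly_Mapping.lookup p m))" if "finite S" for S
    using that by induct (auto simp: assms)
  then show ?thesis
    by (metis poly_mapping_sum_single finite_keys)
qed

lemma const_add: "const (a + b) = const a + const b"
  unfolding const_def by (rule single_add)

lemma const_mult: "const (a * b) = const a * const b"
  by (simp add: const_def mult_single)

lemma const_0 [simp]: "const 0 = 0" and const_1 [simp]: "const 1 = 1"
  by (simp_all add: const_def)

definition eval_mono :: "(nat \<Rightarrow> zpoly) \<Rightarrow> mono \<Rightarrow> zpoly" where
  "eval_mono f m = (\<Prod>i\<in>Poly_Mapping.keys m. f i ^ Poly_Mapping.lookup m i)"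

lemma keys_add_mono: "Poly_Mapping.keys (a + b :: mono) = Poly_Mapping.keys a \<union> Poly_Mapping.keys b"
  by (auto simp: in_keys_iff lookup_add)

lemma eval_mono_superset:
  "finite S \<Longrightarrow> Poly_Mapping.keys m \<subseteq> S \<Longrightarrow> eval_mono f m = (\<Prod>i\<in>S. f i ^ Poly_Mapping.lookup m i)"
  unfolding eval_mono_def by (rule prod.mono_neutral_left) (auto simp: in_keys_iff)

lemma eval_mono_add: "eval_mono f (a + b) = eval_mono f a * eval_mono f b"
proof -
  let ?S = "Poly_Mapping.keys a \<union> Poly_Mapping.keys b"
  have "eval_mono f (a + b) = (\<Prod>i\<in>?S. f i ^ Poly_Mapping.lookup (a + b) i)"
    by (rule eval_mono_superset) (auto simp: keys_add_mono)
  also have "\<dots> = (\<Prod>i\<in>?S. f i ^ Poly_Mapping.lookup a i * f i ^ Poly_Mapping.lookup b i)"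
    by (simp add: lookup_add power_add)
  also have "\<dots> = eval_mono f a * eval_mono f b"
    by (simp add: prod.distrib eval_mono_superset[of ?S])
  finally show ?thesis .
qed

lemma eval_mono_zero [simp]: "eval_mono f 0 = 1"
  by (simp add: eval_mono_def)

lemma subst_eq: "subst f p = (\<Sum>m\<in>Poly_Mapping.keys p. const (Poly_Mapping.lookup p m) * eval_mono f m)"
  by (simp add: subst_def eval_mono_def)

lemma subst_single [simp]: "subst f (Poly_Mapping.single m c) = const c * eval_mono f m"
  by (cases "c = 0") (simp_all add: subst_eq)

lemma subst_zero [simp]: "subst f 0 = 0"
  by (simp add: subst_eq)

lemma subst_add: "subst f (p + q) = subst f p + subst f q"
  unfolding subst_eq
  by (rule setsum_keys_plus_distrib)
    (simp_all only: const_add distrib_right const_0 mult_zero_left)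

lemma subst_mult: "subst f (p * q) = subst f p * subst f q"
proof (induction p arbitrary: q rule: zpoly_induct)
  case (single m c)
  show ?case
  proof (induction q rule: zpoly_induct)
    case (single m' c')
    then show ?case
      by (simp only: mult_single subst_single const_mult eval_mono_add mult_ac)
  qed (simp_all add: distrib_left subst_add)
qed (simp_all add: distrib_right subst_add)

lemma subst_one [simp]: "subst f 1 = 1"
  by (metis single_one subst_single const_1 eval_mono_zero mult_1)

lemma subst_var [simp]: "subst f (var i) = f i"
  by (simp add: var_def eval_mono_def)

lemma mdeg_superset:
  "finite S \<Longrightarrow> Poly_Mapping.keys m \<subseteq> S \<Longrightarrow> mdeg m = (\<Sum>i\<in>S. i * Poly_Mapping.lookup m i)"
  unfolding mdeg_def by (rule sum.mono_neutral_left) (auto simp: in_keys_iff)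

lemma mdeg_add: "mdeg (a + b) = mdeg a + mdeg b"
proof -
  let ?S = "Poly_Mapping.keys a \<union> Poly_Mapping.keys b"
  have "mdeg (a + b) = (\<Sum>i\<in>?S. i * Poly_Mapping.lookup (a + b) i)"
    by (rule mdeg_superset) (auto simp: keys_add_mono)
  also have "\<dots> = (\<Sum>i\<in>?S. i * Poly_Mapping.lookup a i + i * Poly_Mapping.lookup b i)"
    by (simp add: lookup_add algebra_simps)
  also have "\<dots> = mdeg a + mdeg b"
    by (simp add: sum.distrib mdeg_superset[of ?S])
  finally show ?thesis .
qed

lemma mdeg_zero [simp]: "mdeg 0 = 0"
  by (simp add: mdeg_def)

lemma mdeg_single [simp]: "mdeg (Poly_Mapping.single i e) = i * e"
  by (cases "e = 0") (simp_all add: mdeg_def)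

lemma lookup_hpart:
  "Poly_Mapping.lookup (hpart d p) m = (if mdeg m = d then Poly_Mapping.lookup p m else 0)"
proof -
  have "Poly_Mapping.lookup (hpart d p) m =
      (\<Sum>m'\<in>{m\<in>Poly_Mapping.keys p. mdeg m = d}. if m' = m then Poly_Mapping.lookup p m' else 0)"
    by (simp add: hpart_def lookup_sum lookup_single when_def)
  also have "\<dots> = (if mdeg m = d then Poly_Mapping.lookup p m else 0)"
    by (auto simp: in_keys_iff)
  finally show ?thesis .
qed

lemma keys_hpart: "Poly_Mapping.keys (hpart d p) = {m\<in>Poly_Mapping.keys p. mdeg m = d}"
  by (auto simp: in_keys_iff lookup_hpart split: if_splits)

lemma hpart_add: "hpart d (p + q) = hpart d p + hpart d q"
  by (rule poly_mapping_eqI) (simp add: lookup_hpart lookup_add)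

lemma hpart_zero [simp]: "hpart d 0 = 0"
  by (rule poly_mapping_eqI) (simp add: lookup_hpart)

lemma hpart_sum: "hpart d (\<Sum>x\<in>A. g x) = (\<Sum>x\<in>A. hpart d (g x))"
  by (induction A rule: infinite_finite_induct) (simp_all add: hpart_add)

lemma hpart_single:
  "hpart d (Poly_Mapping.single m c) = (if mdeg m = d then Poly_Mapping.single m c else 0)"
  by (rule poly_mapping_eqI) (auto simp add: lookup_hpart lookup_single when_def)

lemma homog_iff_hpart: "homog d p \<longleftrightarrow> hpart d p = p"
proof
  assume "homog d p"
  then show "hpart d p = p"
    by (intro poly_mapping_eqI) (auto simp: lookup_hpart homog_def in_keys_iff)
next
  assume "hpart d p = p"
  then show "homog d p"
    by (metis (mono_tags, lifting) homog_def keys_hpart mem_Collect_eq)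
qed

lemma homog_hpart: "homog d (hpart d p)"
  by (simp add: homog_def keys_hpart)

lemma hpart_homog: "homog e p \<Longrightarrow> hpart d p = (if d = e then p else 0)"
proof (cases "d = e")
  case False
  assume "homog e p"
  then have "hpart d p = 0"
    using False by (intro poly_mapping_eqI) (auto simp: lookup_hpart homog_def in_keys_iff)
  then show ?thesis using False by simp
qed (simp add: homog_iff_hpart)

lemma homog_zero [simp]: "homog d 0"
  by (simp add: homog_def)

lemma homog_add: "homog d p \<Longrightarrow> homog d q \<Longrightarrow> homog d (p + q)"
  by (simp add: homog_iff_hpart hpart_add)

lemma homog_sum: "(\<And>x. x \<in> A \<Longrightarrow> homog d (g x)) \<Longrightarrow> homog d (\<Sum>x\<in>A. g x)"
  by (induction A rule: infinite_finite_induct) (simp_all add: homog_add)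

lemma homog_mult: "homog a p \<Longrightarrow> homog b q \<Longrightarrow> homog (a + b) (p * q)"
  unfolding homog_def using keys_mult[of p q] by (auto simp: mdeg_add)

lemma homog_single: "homog (mdeg m) (Poly_Mapping.single m c)"
  by (simp add: homog_def)

lemma homog_one [simp]: "homog 0 1"
  by (simp add: homog_def)

lemma homog_var [simp]: "homog i (var i)"
  by (simp add: homog_def var_def)

lemma homog_of_nat [simp]: "homog 0 (of_nat c)"
  by (metis homog_single mdeg_zero single_of_nat)

definition deg_ge :: "nat \<Rightarrow> zpoly \<Rightarrow> bool" where
  "deg_ge a p \<longleftrightarrow> (\<forall>m\<in>Poly_Mapping.keys p. a \<le> mdeg m)"

lemma hpart_deg_ge: "deg_ge a p \<Longrightarrow> d < a \<Longrightarrow> hpart d p = 0"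
  by (rule poly_mapping_eqI) (auto simp: lookup_hpart deg_ge_def in_keys_iff not_le[symmetric])

lemma deg_ge_mono: "deg_ge a p \<Longrightarrow> b \<le> a \<Longrightarrow> deg_ge b p"
  by (auto simp: deg_ge_def)

lemma deg_ge_zero [simp]: "deg_ge a 0"
  by (simp add: deg_ge_def)

lemma deg_ge_add: "deg_ge a p \<Longrightarrow> deg_ge a q \<Longrightarrow> deg_ge a (p + q)"
  unfolding deg_ge_def using keys_add[of p q] by auto

lemma deg_ge_sum: "(\<And>x. x \<in> A \<Longrightarrow> deg_ge d (g x)) \<Longrightarrow> deg_ge d (\<Sum>x\<in>A. g x)"
  by (induction A rule: infinite_finite_induct) (simp_all add: deg_ge_add)

lemma deg_ge_mult: "deg_ge a p \<Longrightarrow> deg_ge b q \<Longrightarrow> deg_ge (a + b) (p * q)"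
  unfolding deg_ge_def using keys_mult[of p q] by (force simp: mdeg_add)

lemma deg_ge_one [simp]: "deg_ge 0 1"
  by (simp add: deg_ge_def)

lemma deg_ge_const [simp]: "deg_ge 0 (const c)"
  by (simp add: deg_ge_def)

lemma deg_ge_power: "deg_ge a p \<Longrightarrow> deg_ge (a * e) (p ^ e)"
  by (induction e) (simp_all add: deg_ge_mult)

lemma deg_ge_prod:
  "(\<And>x. x \<in> A \<Longrightarrow> deg_ge (g x) (h x)) \<Longrightarrow> deg_ge (\<Sum>x\<in>A. g x) (\<Prod>x\<in>A. h x)"
  by (induction A rule: infinite_finite_induct) (simp_all add: deg_ge_mult)

lemma homog_imp_deg_ge: "homog a p \<Longrightarrow> deg_ge a p"
  by (simp add: homog_def deg_ge_def)

lemma deg_ge_eval_mono: "(\<And>i. deg_ge i (f i)) \<Longrightarrow> deg_ge (mdeg m) (eval_mono f m)"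
  unfolding eval_mono_def mdeg_def by (rule deg_ge_prod) (simp add: deg_ge_power)

lemma deg_ge_subst: "(\<And>i. deg_ge i (f i)) \<Longrightarrow> homog a x \<Longrightarrow> deg_ge a (subst f x)"
  unfolding subst_eq
  by (rule deg_ge_sum) (metis add_0 homog_def deg_ge_const deg_ge_eval_mono deg_ge_mult)

lemma hpart_mult: "hpart c (p * q) = (\<Sum>d\<le>c. hpart d p * hpart (c - d) q)"
proof (induction p arbitrary: q rule: zpoly_induct)
  case (single m a)
  show ?case
  proof (induction q rule: zpoly_induct)
    case (single m' b)
    let ?x = "Poly_Mapping.single m a" and ?y = "Poly_Mapping.single m' b"
    show ?case
    proof (cases "mdeg m + mdeg m' = c")
      case True
      then have "(\<Sum>d\<le>c. hpart d ?x * hpart (c - d) ?y) = (\<Sum>d\<le>c. if d = mdeg m then ?x * ?y else 0)"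
        by (intro sum.cong) (auto simp: hpart_single)
      then show ?thesis
        using True by (simp add: mult_single hpart_single mdeg_add)
    next
      case False
      then have "(\<Sum>d\<le>c. hpart d ?x * hpart (c - d) ?y) = 0"
        by (intro sum.neutral) (auto simp: hpart_single)
      then show ?thesis
        using False by (simp add: mult_single hpart_single mdeg_add)
    qed
  qed (simp_all add: distrib_left hpart_add sum.distrib)
qed (simp_all add: distrib_right hpart_add sum.distrib)

lemma hpart_mult_deg_ge:
  assumes p: "deg_ge a p" and q: "deg_ge b q"
  shows "hpart (a + b + k) (p * q) = (\<Sum>i\<le>k. hpart (a + i) p * hpart (b + (k - i)) q)"
proof -
  have "hpart (a + b + k) (p * q) = (\<Sum>d\<le>a + b + k. hpart d p * hpart (a + b + k - d) q)"
    by (rule hpart_mult)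
  also have "\<dots> = (\<Sum>d\<in>{0 + a..k + a}. hpart d p * hpart (a + b + k - d) q)"
  proof (rule sum.mono_neutral_right)
    show "\<forall>d\<in>{..a + b + k} - {0 + a..k + a}. hpart d p * hpart (a + b + k - d) q = 0"
      using hpart_deg_ge[OF p] hpart_deg_ge[OF q] by (auto simp: not_le)
  qed auto
  also have "\<dots> = (\<Sum>i\<le>k. hpart (a + i) p * hpart (b + (k - i)) q)"
    by (simp only: sum.shift_bounds_cl_nat_ivl atLeast0AtMost)
      (intro sum.cong refl, simp add: add.commute)
  finally show ?thesis .
qed

section \<open>Steenrod squares\<close>

lemma homog_sw: "homog j (sw N j)"
  by (simp add: sw_def)

lemma homog_SqW: "homog (m + k) (SqW N k m)"
proof (cases "k \<le> m")
  case True
  have "homog (m + k) (of_nat ((m - k + t - 1) choose t) * sw N (k - t) * sw N (m + t))"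
    if "t \<le> k" for t
  proof -
    have "homog (0 + (k - t) + (m + t))
        (of_nat ((m - k + t - 1) choose t) * sw N (k - t) * sw N (m + t))"
      by (intro homog_mult homog_of_nat homog_sw)
    with that show ?thesis by (simp add: add.commute)
  qed
  then show ?thesis
    using True unfolding SqW_def by (auto intro!: homog_sum)
qed (simp add: SqW_def)

lemma SqW_gt: "m < k \<Longrightarrow> SqW N k m = 0"
  by (simp add: SqW_def)

definition total_Sq_var :: "nat \<Rightarrow> nat \<Rightarrow> zpoly" where
  "total_Sq_var N m = (\<Sum>k\<le>m. SqW N k m)"

lemma totSq_eq_subst: "totSq N = subst (total_Sq_var N)"
  by (simp add: totSq_def total_Sq_var_def[abs_def])

lemma deg_ge_total_Sq_var: "deg_ge i (total_Sq_var N i)"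
  unfolding total_Sq_var_def
  by (intro deg_ge_sum deg_ge_mono[OF homog_imp_deg_ge[OF homog_SqW]]) simp

lemma hpart_total_Sq_var: "hpart (i + k) (total_Sq_var N i) = SqW N k i"
proof -
  have "hpart (i + k) (total_Sq_var N i) = (\<Sum>k'\<le>i. if k' = k then SqW N k' i else 0)"
    unfolding total_Sq_var_def hpart_sum
    by (intro sum.cong refl) (simp add: hpart_homog[OF homog_SqW])
  also have "\<dots> = SqW N k i"
    by (simp add: SqW_gt)
  finally show ?thesis .
qed

lemma totSq_add: "totSq N (p + q) = totSq N p + totSq N q"
  by (simp add: totSq_def subst_add)

lemma totSq_mult: "totSq N (p * q) = totSq N p * totSq N q"
  by (simp add: totSq_def subst_mult)

lemma deg_ge_totSq: "homog a x \<Longrightarrow> deg_ge a (totSq N x)"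
  unfolding totSq_eq_subst by (rule deg_ge_subst[OF deg_ge_total_Sq_var])

lemma Sq_homog: "homog d p \<Longrightarrow> Sq N k p = hpart (d + k) (totSq N p)"
proof (cases "p = 0")
  case True
  then show ?thesis by (simp add: Sq_def totSq_def)
next
  case False
  assume d: "homog d p"
  have "mdeg ` Poly_Mapping.keys p \<subseteq> {d}" "Poly_Mapping.keys p \<noteq> {}"
    using d False by (auto simp: homog_def)
  then have "mdeg ` Poly_Mapping.keys p = {d}"
    by blast
  with d show ?thesis
    by (simp add: Sq_def homog_iff_hpart)
qed

lemma Sq_zero [simp]: "Sq N k 0 = 0"
  by (simp add: Sq_def)

lemma Sq_superset:
  assumes "finite D" "mdeg ` Poly_Mapping.keys p \<subseteq> D"
  shows "Sq N k p = (\<Sum>d\<in>D. hpart (d + k) (totSq N (hpart d p)))"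
  unfolding Sq_def
proof (rule sum.mono_neutral_left[OF assms])
  show "\<forall>i\<in>D - mdeg ` Poly_Mapping.keys p. hpart (i + k) (totSq N (hpart i p)) = 0"
  proof
    fix i assume "i \<in> D - mdeg ` Poly_Mapping.keys p"
    then have "hpart i p = 0"
      by (metis (mono_tags, lifting) DiffD2 empty_Collect_eq image_eqI keys_eq_empty keys_hpart)
    then show "hpart (i + k) (totSq N (hpart i p)) = 0"
      by (simp add: totSq_def)
  qed
qed

lemma Sq_add: "Sq N k (p + q) = Sq N k p + Sq N k q"
proof -
  let ?D = "mdeg ` Poly_Mapping.keys p \<union> mdeg ` Poly_Mapping.keys q"
  have "mdeg ` Poly_Mapping.keys (p + q) \<subseteq> ?D"
    using keys_add[of p q] by auto
  then show ?thesis
    by (simp add: Sq_superset[of ?D] hpart_add totSq_add sum.distrib)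
qed

lemma Sq_var: "Sq N k (var i) = SqW N k i"
  by (simp add: Sq_homog[OF homog_var] totSq_eq_subst hpart_total_Sq_var)

lemma Sq_one: "Sq N k 1 = (if k = 0 then 1 else 0)"
  by (simp add: Sq_homog[OF homog_one] totSq_def hpart_homog[OF homog_one])

lemma homog_Sq: "homog d p \<Longrightarrow> homog (d + k) (Sq N k p)"
  by (simp add: Sq_homog homog_hpart)

lemma Sq_of_nat_mult: "Sq N k (of_nat c * p) = of_nat c * Sq N k p"
  by (simp add: of_nat_zpoly)

text \<open>The total square is multiplicative and raises degrees, so its homogeneous
  components multiply like those of a product of graded series.\<close>
lemma Sq_mult:
  assumes x: "homog a x" and y: "homog b y"
  shows "Sq N k (x * y) = (\<Sum>i\<le>k. Sq N i x * Sq N (k - i) y)"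
proof -
  have "Sq N k (x * y) = hpart (a + b + k) (totSq N x * totSq N y)"
    using Sq_homog[OF homog_mult[OF x y]] by (simp add: totSq_mult)
  also have "\<dots> = (\<Sum>i\<le>k. hpart (a + i) (totSq N x) * hpart (b + (k - i)) (totSq N y))"
    using x y by (intro hpart_mult_deg_ge deg_ge_totSq)
  finally show ?thesis
    by (simp add: Sq_homog[OF x] Sq_homog[OF y])
qed

lemma sum_atMost_1: "(\<Sum>i\<le>(1::nat). g i) = g 0 + g 1"
  by (simp add: atMost_Suc One_nat_def add_ac)

lemma sum_atMost_2: "(\<Sum>i\<le>(2::nat). g i) = g 0 + g 1 + g 2"
  by (simp add: atMost_Suc numeral_2_eq_2 One_nat_def add_ac)

lemma sum_atMost_3: "(\<Sum>i\<le>(3::nat). g i) = g 0 + g 1 + g 2 + g 3"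
  by (simp add: atMost_Suc numeral_3_eq_3 numeral_2_eq_2 One_nat_def add_ac)

lemma Sq1_mult:
  "homog a x \<Longrightarrow> homog b y \<Longrightarrow> Sq N 1 (x * y) = Sq N 0 x * Sq N 1 y + Sq N 1 x * Sq N 0 y"
  by (simp add: Sq_mult sum_atMost_1)

lemma Sq2_mult:
  "homog a x \<Longrightarrow> homog b y \<Longrightarrow>
    Sq N 2 (x * y) = Sq N 0 x * Sq N 2 y + Sq N 1 x * Sq N 1 y + Sq N 2 x * Sq N 0 y"
  by (simp add: Sq_mult sum_atMost_2 numeral_2_eq_2)

lemma Sq3_mult:
  "homog a x \<Longrightarrow> homog b y \<Longrightarrow>
    Sq N 3 (x * y) = Sq N 0 x * Sq N 3 y + Sq N 1 x * Sq N 2 y + Sq N 2 x * Sq N 1 y + Sq N 3 x * Sq N 0 y"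
  by (simp add: Sq_mult sum_atMost_3 numeral_3_eq_3 numeral_2_eq_2)

lemma HBSO_iff: "p \<in> HBSO N \<longleftrightarrow> (\<forall>m\<in>Poly_Mapping.keys p. Poly_Mapping.keys m \<subseteq> {2..N})"
  by (simp add: HBSO_def)

lemma HBSO_zero [simp]: "0 \<in> HBSO N"
  by (simp add: HBSO_iff)

lemma HBSO_one [simp]: "1 \<in> HBSO N"
  by (simp add: HBSO_iff)

lemma HBSO_add: "p \<in> HBSO N \<Longrightarrow> q \<in> HBSO N \<Longrightarrow> p + q \<in> HBSO N"
  using keys_add[of p q] by (auto simp: HBSO_iff)

lemma HBSO_mult: "p \<in> HBSO N \<Longrightarrow> q \<in> HBSO N \<Longrightarrow> p * q \<in> HBSO N"
  using keys_mult[of p q] by (force simp: HBSO_iff keys_add_mono)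

lemma HBSO_single: "Poly_Mapping.keys m \<subseteq> {2..N} \<Longrightarrow> Poly_Mapping.single m c \<in> HBSO N"
  by (simp add: HBSO_iff)

lemma HBSO_var: "2 \<le> i \<Longrightarrow> i \<le> N \<Longrightarrow> var i \<in> HBSO N"
  by (simp add: var_def HBSO_iff)

lemma HBSO_of_nat [simp]: "of_nat c \<in> HBSO N"
  by (metis HBSO_single keys_zero empty_subsetI single_of_nat)

lemma HBSO_const [simp]: "const c \<in> HBSO N"
  by (simp add: const_def HBSO_single)

lemma HBSO_sw [simp]: "sw N j \<in> HBSO N"
  by (simp add: sw_def HBSO_var)

lemma HBSO_hpart: "p \<in> HBSO N \<Longrightarrow> hpart d p \<in> HBSO N"
  by (simp add: HBSO_iff keys_hpart)

lemma HBSO_sum: "(\<And>x. x \<in> A \<Longrightarrow> g x \<in> HBSO N) \<Longrightarrow> (\<Sum>x\<in>A. g x) \<in> HBSO N"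
  by (induction A rule: infinite_finite_induct) (simp_all add: HBSO_add)

lemma HBSO_prod: "(\<And>x. x \<in> A \<Longrightarrow> g x \<in> HBSO N) \<Longrightarrow> (\<Prod>x\<in>A. g x) \<in> HBSO N"
  by (induction A rule: infinite_finite_induct) (simp_all add: HBSO_mult)

lemma HBSO_power: "p \<in> HBSO N \<Longrightarrow> p ^ e \<in> HBSO N"
  by (induction e) (simp_all add: HBSO_mult)

lemma HBSO_mono: "N \<le> N' \<Longrightarrow> p \<in> HBSO N \<Longrightarrow> p \<in> HBSO N'"
  by (fastforce simp: HBSO_iff)

lemma HBSO_subst:
  assumes x: "x \<in> HBSO N" and f: "\<And>i. 2 \<le> i \<Longrightarrow> i \<le> N \<Longrightarrow> f i \<in> HBSO N"
  shows "subst f x \<in> HBSO N"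
  unfolding subst_eq eval_mono_def
proof (intro HBSO_sum HBSO_mult[OF HBSO_const] HBSO_prod HBSO_power)
  fix m i
  assume "m \<in> Poly_Mapping.keys x" "i \<in> Poly_Mapping.keys m"
  with x have "2 \<le> i" "i \<le> N"
    by (fastforce simp: HBSO_iff)+
  then show "f i \<in> HBSO N"
    by (rule f)
qed

lemma HBSO_SqW: "SqW N k m \<in> HBSO N"
  unfolding SqW_def by (auto intro!: HBSO_sum HBSO_mult)

lemma HBSO_Sq: "x \<in> HBSO N \<Longrightarrow> Sq N k x \<in> HBSO N"
  unfolding Sq_def totSq_eq_subst total_Sq_var_def
  by (intro HBSO_sum HBSO_hpart HBSO_subst HBSO_SqW)

lemma var_power: "var i ^ e = Poly_Mapping.single (Poly_Mapping.single i e) 1"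
  by (induction e) (simp_all add: var_def mult_single single_add[symmetric] add.commute)

lemma prod_single_one:
  "(\<Prod>i\<in>A. Poly_Mapping.single (g i) (1::bit)) = Poly_Mapping.single (\<Sum>i\<in>A. g i) 1"
  by (induction A rule: infinite_finite_induct) (simp_all add: mult_single)

lemma single_one_eq_prod_var:
  "Poly_Mapping.single m 1 = (\<Prod>i\<in>Poly_Mapping.keys m. var i ^ Poly_Mapping.lookup m i)"
  by (simp add: var_power prod_single_one poly_mapping_sum_single[of m, symmetric])

lemma mono_induct [consumes 1, case_names one var mult]:
  fixes P :: "zpoly \<Rightarrow> bool"
  assumes m: "Poly_Mapping.keys m \<subseteq> {2..N}"
    and one: "P 1" and var: "\<And>i. 2 \<le> i \<Longrightarrow> i \<le> N \<Longrightarrow> P (var i)"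
    and mult: "\<And>x y a b. homog a x \<Longrightarrow> homog b y \<Longrightarrow> x \<in> HBSO N \<Longrightarrow> y \<in> HBSO N \<Longrightarrow>
      P x \<Longrightarrow> P y \<Longrightarrow> P (x * y)"
  shows "P (Poly_Mapping.single m 1)"
proof -
  define R where "R x \<longleftrightarrow> P x \<and> x \<in> HBSO N \<and> (\<exists>a. homog a x)" for x
  have R_one: "R 1"
    using one by (auto simp: R_def intro: homog_one)
  have R_mult: "R (x * y)" if "R x" "R y" for x y
    using that mult by (auto simp: R_def HBSO_mult intro: homog_mult)
  have R_power: "R (var i ^ e)" if "2 \<le> i" "i \<le> N" for i e
  proof (induction e)
    case (Suc e)
    have "R (var i)"
      using var[OF that] HBSO_var[OF that] homog_var[of i] unfolding R_def by blast
    with Suc show ?case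
      using R_mult by simp
  qed (simp add: R_one)
  have "R (\<Prod>i\<in>A. var i ^ Poly_Mapping.lookup m i)" if "A \<subseteq> {2..N}" for A
    using that by (induction A rule: infinite_finite_induct) (auto simp: R_one R_mult R_power)
  with m show ?thesis
    by (simp add: single_one_eq_prod_var R_def)
qed

lemma HBSO_induct [consumes 1, case_names zero add mono]:
  fixes P :: "zpoly \<Rightarrow> bool"
  assumes x: "x \<in> HBSO N" and zero: "P 0" and add: "\<And>p q. P p \<Longrightarrow> P q \<Longrightarrow> P (p + q)"
    and mono: "\<And>m. Poly_Mapping.keys m \<subseteq> {2..N} \<Longrightarrow> P (Poly_Mapping.single m 1)"
  shows "P x"
proof -
  have "P (\<Sum>m\<in>A. Poly_Mapping.single m (Poly_Mapping.lookup x m))"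
    if "A \<subseteq> Poly_Mapping.keys x" for A
    using that
  proof (induction A rule: infinite_finite_induct)
    case (insert m F)
    then have "Poly_Mapping.lookup x m = 1" "Poly_Mapping.keys m \<subseteq> {2..N}"
      using x by (auto simp: in_keys_iff bit_not_zero_iff HBSO_iff)
    with insert show ?case
      by (simp add: add mono)
  qed (simp_all add: zero)
  then show ?thesis
    by (metis poly_mapping_sum_single order_refl)
qed

section \<open>The Milnor primitives as derivations\<close>

definition HBSO_derivation :: "nat \<Rightarrow> (zpoly \<Rightarrow> zpoly) \<Rightarrow> bool" where
  "HBSO_derivation N D \<longleftrightarrow> (\<forall>p q. D (p + q) = D p + D q) \<and>
     (\<forall>a b x y. homog a x \<longrightarrow> homog b y \<longrightarrow> x \<in> HBSO N \<longrightarrow> y \<in> HBSO N \<longrightarrow>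
        D (x * y) = D x * y + x * D y)"

lemma HBSO_derivationI:
  assumes "\<And>p q. D (p + q) = D p + D q"
    and "\<And>a b x y. homog a x \<Longrightarrow> homog b y \<Longrightarrow> x \<in> HBSO N \<Longrightarrow> y \<in> HBSO N \<Longrightarrow>
      D (x * y) = D x * y + x * D y"
  shows "HBSO_derivation N D"
  using assms by (simp add: HBSO_derivation_def)

lemma derivation_add: "HBSO_derivation N D \<Longrightarrow> D (p + q) = D p + D q"
  by (simp add: HBSO_derivation_def)

lemma derivation_mult:
  "HBSO_derivation N D \<Longrightarrow> homog a x \<Longrightarrow> homog b y \<Longrightarrow> x \<in> HBSO N \<Longrightarrow> y \<in> HBSO N \<Longrightarrow>
    D (x * y) = D x * y + x * D y"
  by (simp add: HBSO_derivation_def)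

lemma derivation_zero: "HBSO_derivation N D \<Longrightarrow> D 0 = 0"
  using derivation_add[of N D 0 0] by simp

lemma derivation_one: "HBSO_derivation N D \<Longrightarrow> D 1 = 0"
  using derivation_mult[of N D 0 1 0 1] by simp

lemma HBSO_derivation_mono: "N \<le> N' \<Longrightarrow> HBSO_derivation N' D \<Longrightarrow> HBSO_derivation N D"
  unfolding HBSO_derivation_def by (meson HBSO_mono)

lemma derivation_eqI:
  assumes D: "HBSO_derivation N D" and D': "HBSO_derivation N D'"
    and gen: "\<And>i. 2 \<le> i \<Longrightarrow> i \<le> N \<Longrightarrow> D (var i) = D' (var i)"
    and x: "x \<in> HBSO N"
  shows "D x = D' x"
  using x
proof (induction x rule: HBSO_induct)
  case (mono m)
  then show ?case
  proof (induction rule: mono_induct)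
    case (mult x y a b)
    then show ?case
      using derivation_mult[OF D] derivation_mult[OF D'] by simp
  qed (simp_all add: gen derivation_one[OF D] derivation_one[OF D'])
qed (simp_all add: derivation_zero[OF D] derivation_zero[OF D'] derivation_add[OF D]
    derivation_add[OF D'])

lemma derivation_mult_homog_left:
  assumes D: "HBSO_derivation N D" and a: "homog a x" "x \<in> HBSO N" and y: "y \<in> HBSO N"
  shows "D (x * y) = D x * y + x * D y"
  using y
proof (induction y rule: HBSO_induct)
  case (mono m)
  then show ?case
    using derivation_mult[OF D a(1) homog_single a(2) HBSO_single] by blast
qed (simp_all add: derivation_zero[OF D] derivation_add[OF D] distrib_left distrib_right)

declare of_nat_diff [simp del] One_nat_def [simp del]

lemma sw_0 [simp]: "sw N 0 = 1" and sw_1 [simp]: "sw N 1 = 0" and sw_Suc_0 [simp]: "sw N (Suc 0) = 0"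
  by (simp_all add: sw_def)

lemma sw_var: "2 \<le> j \<Longrightarrow> j \<le> N \<Longrightarrow> sw N j = var j"
  by (simp add: sw_def)

lemma sw_gt: "N < j \<Longrightarrow> sw N j = 0"
  by (simp add: sw_def)

lemma SqW_0: "SqW N 0 i = sw N i"
  by (simp add: SqW_def)

lemma SqW_1: "2 \<le> i \<Longrightarrow> SqW N 1 i = of_nat (i - 1) * sw N (i + 1)"
  by (simp add: SqW_def sum_atMost_1 One_nat_def)

lemma SqW_2: "2 \<le> i \<Longrightarrow> SqW N 2 i = sw N 2 * sw N i + of_nat ((i - 1) choose 2) * sw N (i + 2)"
  by (simp add: SqW_def sum_atMost_2 One_nat_def)

lemma SqW_3:
  "3 \<le> i \<Longrightarrow> SqW N 3 i = sw N 3 * sw N i + of_nat (i - 3) * sw N 2 * sw N (i + 1)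
    + of_nat ((i - 1) choose 3) * sw N (i + 3)"
  by (simp add: SqW_def sum_atMost_3 add_ac One_nat_def)

lemma Sq0_HBSO: "x \<in> HBSO N \<Longrightarrow> Sq N 0 x = x"
proof (induction x rule: HBSO_induct)
  case (mono m)
  then show ?case
  proof (induction rule: mono_induct)
    case (mult x y a b)
    then show ?case by (simp add: Sq_mult[of _ _ _ _ N 0])
  qed (simp_all add: Sq_one Sq_var SqW_0 sw_var)
qed (simp_all add: Sq_add)

lemma Sq1_mult_HBSO:
  "homog a x \<Longrightarrow> homog b y \<Longrightarrow> x \<in> HBSO N \<Longrightarrow> y \<in> HBSO N \<Longrightarrow>
    Sq N 1 (x * y) = Sq N 1 x * y + x * Sq N 1 y"
  by (simp add: Sq1_mult Sq0_HBSO)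

lemma Sq1_var: "2 \<le> i \<Longrightarrow> Sq N 1 (var i) = of_nat (i - 1) * sw N (i + 1)"
  by (simp add: Sq_var SqW_1)

lemma Sq_sw: "2 \<le> j \<Longrightarrow> Sq N k (sw N j) = (if j \<le> N then Sq N k (var j) else 0)"
  by (simp add: sw_def)

lemma Sq1_sw: "2 \<le> j \<Longrightarrow> Sq N 1 (sw N j) = of_nat (j - 1) * sw N (j + 1)"
  by (simp add: Sq_sw Sq1_var sw_gt)

lemma Sq2_sw:
  "2 \<le> j \<Longrightarrow> Sq N 2 (sw N j) = sw N 2 * sw N j + of_nat ((j - 1) choose 2) * sw N (j + 2)"
  by (simp add: Sq_sw Sq_var SqW_2 sw_gt)

lemma Sq1_Sq1_var: "2 \<le> i \<Longrightarrow> Sq N 1 (Sq N 1 (var i)) = 0"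
proof -
  assume i: "2 \<le> i"
  then have "Sq N 1 (Sq N 1 (var i)) = of_nat (i - 1) * Sq N 1 (sw N (i + 1))"
    by (simp add: Sq1_var Sq_of_nat_mult)
  also have "\<dots> = of_nat ((i - 1) * i) * sw N (i + 2)"
    using i Sq1_sw[of "i + 1" N] by (simp add: mult.assoc add.assoc)
  also have "\<dots> = 0"
  proof -
    have "even ((i - 1) * i)"
      using i by simp
    then show ?thesis
      by (simp only: of_nat_zpoly_even mult_zero_left)
  qed
  finally show ?thesis .
qed

lemma Sq1_Sq1: "x \<in> HBSO N \<Longrightarrow> Sq N 1 (Sq N 1 x) = 0"
proof (induction x rule: HBSO_induct)
  case (mono m)
  then show ?case
  proof (induction rule: mono_induct)
    case (mult x y a b)
    then show ?case
      using homog_Sq[of a x 1 N] homog_Sq[of b y 1 N] HBSO_Sq[of x N 1] HBSO_Sq[of y N 1]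
      by (simp add: Sq1_mult_HBSO Sq_add)
  qed (simp_all add: Sq_one Sq1_Sq1_var)
qed (simp_all add: Sq_add)

lemma Q0_derivation: "HBSO_derivation N (Q0 N)"
  by (rule HBSO_derivationI) (simp_all add: Q0_def Sq_add Sq1_mult_HBSO)

text \<open>The cross terms of the Cartan formula for \<open>Sq\<^sup>3\<close> and \<open>Sq\<^sup>2 Sq\<^sup>1\<close> cancel in pairs.\<close>
lemma Q1_mult:
  assumes x: "homog a x" "x \<in> HBSO N" and y: "homog b y" "y \<in> HBSO N"
  shows "Q1 N (x * y) = Q1 N x * y + x * Q1 N y"
proof -
  have Sq1x: "homog (a + 1) (Sq N 1 x)" "Sq N 1 x \<in> HBSO N"
    and Sq1y: "homog (b + 1) (Sq N 1 y)" "Sq N 1 y \<in> HBSO N"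
    using x y by (simp_all add: homog_Sq HBSO_Sq)
  have "Sq N 3 (x * y) = x * Sq N 3 y + Sq N 1 x * Sq N 2 y + Sq N 2 x * Sq N 1 y + Sq N 3 x * y"
    using Sq3_mult[OF x(1) y(1)] x y by (simp add: Sq0_HBSO)
  moreover have "Sq N 2 (Sq N 1 x * y) = Sq N 1 x * Sq N 2 y + Sq N 2 (Sq N 1 x) * y"
    using Sq2_mult[OF Sq1x(1) y(1)] Sq1x y x by (simp add: Sq0_HBSO Sq1_Sq1)
  moreover have "Sq N 2 (x * Sq N 1 y) = x * Sq N 2 (Sq N 1 y) + Sq N 2 x * Sq N 1 y"
    using Sq2_mult[OF x(1) Sq1y(1)] Sq1y y x by (simp add: Sq0_HBSO Sq1_Sq1)
  ultimately have "Q1 N (x * y) = (Q1 N x * y + x * Q1 N y)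
      + (Sq N 1 x * Sq N 2 y + Sq N 1 x * Sq N 2 y) + (Sq N 2 x * Sq N 1 y + Sq N 2 x * Sq N 1 y)"
    unfolding Q1_def Sq1_mult_HBSO[OF x(1) y(1) x(2) y(2)] Sq_add by (simp only: algebra_simps)
  then show ?thesis
    by (simp only: zpoly_add_self add_0_right)
qed

lemma Q1_derivation: "HBSO_derivation N (Q1 N)"
  by (rule HBSO_derivationI) (simp add: Q1_def Sq_add, blast intro: Q1_mult)

section \<open>Restriction from \<open>BSO(2n)\<close> to \<open>BSO(2n-1)\<close>\<close>

lemma Q0_var: "2 \<le> i \<Longrightarrow> Q0 N (var i) = of_nat (i - 1) * sw N (i + 1)"
  by (simp add: Q0_def Sq1_var)

lemma Sq3_var:
  "2 \<le> i \<Longrightarrow> Sq N 3 (var i) =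
    (if 3 \<le> i then sw N 3 * sw N i + of_nat (i - 3) * sw N 2 * sw N (i + 1)
       + of_nat ((i - 1) choose 3) * sw N (i + 3) else 0)"
  by (simp add: Sq_var SqW_3 SqW_gt)

lemma Sq2_Sq1_var:
  assumes "2 \<le> i"
  shows "Sq N 2 (Sq N 1 (var i)) =
    of_nat (i - 1) * (sw N 2 * sw N (i + 1) + of_nat (i choose 2) * sw N (i + 3))"
proof -
  have index_arith: "i + 1 + 2 = i + 3" "i + 1 - 1 = i"
    by simp_all
  have "Sq N 2 (Sq N 1 (var i)) = of_nat (i - 1) * Sq N 2 (sw N (i + 1))"
    using assms by (simp add: Sq1_var Sq_of_nat_mult)
  also have "Sq N 2 (sw N (i + 1)) = sw N 2 * sw N (i + 1) + of_nat (i choose 2) * sw N (i + 3)"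
    using assms Sq2_sw[of "i + 1" N] by (simp only: index_arith)
  finally show ?thesis .
qed

lemma Q1_var:
  "2 \<le> i \<Longrightarrow> Q1 N (var i) =
    (if 3 \<le> i then sw N 3 * sw N i + of_nat (i - 3) * sw N 2 * sw N (i + 1)
       + of_nat ((i - 1) choose 3) * sw N (i + 3) else 0)
    + of_nat (i - 1) * (sw N 2 * sw N (i + 1) + of_nat (i choose 2) * sw N (i + 3))"
  by (simp add: Q1_def Sq3_var Sq2_Sq1_var)

lemma even_choose_3: "even ((2 * a) choose 3)"
proof (induction a)
  case 0
  then show ?case by (simp add: binomial_eq_0)
next
  case (Suc a)
  have Pascal: "Suc (Suc m) choose 3 = (Suc m choose 2) + ((m choose 2) + (m choose 3))" for m
    by (simp add: numeral_3_eq_3 numeral_2_eq_2)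
  have "(2 * Suc a) choose 3 = ((2 * a + 1) choose 2) + ((2 * a) choose 2) + ((2 * a) choose 3)"
    using Pascal[of "2 * a"] by (simp add: One_nat_def)
  also have "\<dots> = 2 * (2 * a * a) + ((2 * a) choose 3)"
    by (cases a) (simp_all add: choose_two algebra_simps)
  finally show ?case
    using Suc by simp
qed

lemma sw_restrict: "1 \<le> K \<Longrightarrow> j \<noteq> K \<Longrightarrow> sw K j = sw (K - 1) j"
  by (auto simp: sw_def)

text \<open>On \<open>w\<^sub>i\<close> with \<open>i < K\<close>, the class \<open>w\<^sub>K\<close> appears in the Wu formulas only for
  \<open>i = K - 1\<close> and \<open>i = K - 3\<close>, and there its coefficients are even.\<close>
lemma Q0_var_restrict:
  assumes K: "even K" "4 \<le> K" and i: "2 \<le> i" "i \<le> K - 1"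
  shows "Q0 K (var i) = Q0 (K - 1) (var i)"
proof (cases "i + 1 = K")
  case True
  with K have "even (i - 1)"
    by presburger
  with i show ?thesis
    by (simp add: Q0_var)
next
  case False
  with i K show ?thesis
    by (simp add: Q0_var sw_restrict)
qed

lemma Q1_var_restrict:
  assumes K: "even K" "4 \<le> K" and i: "2 \<le> i" "i \<le> K - 1"
  shows "Q1 K (var i) = Q1 (K - 1) (var i)"
proof -
  have K1: "1 \<le> K"
    using K by simp
  have "2 \<noteq> K" "3 \<noteq> K" "i \<noteq> K"
    using K i by presburger+
  with K1 have sw_low: "sw K 2 = sw (K - 1) 2" "sw K 3 = sw (K - 1) 3" "sw K i = sw (K - 1) i"
    by (simp_all add: sw_restrict)
  consider "i + 1 = K" | "i + 3 = K" | "i + 1 \<noteq> K" "i + 3 \<noteq> K"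
    by blast
  then show ?thesis
  proof cases
    case 1
    with K have "even (i - 1)" "even (i - 3)" "3 \<le> i" "i + 3 \<noteq> K"
      by presburger+
    then have "(of_nat (i - 1) :: zpoly) = 0" "(of_nat (i - 3) :: zpoly) = 0"
      by simp_all
    with i K1 sw_low \<open>3 \<le> i\<close> \<open>i + 3 \<noteq> K\<close> show ?thesis
      by (simp add: Q1_var sw_restrict)
  next
    case 2
    with K have "even (i - 1)" "i + 1 \<noteq> K"
      by presburger+
    moreover have "even ((i - 1) choose 3)"
      using \<open>even (i - 1)\<close> even_choose_3 by (metis evenE)
    ultimately show ?thesis
      using i K1 sw_low by (simp add: Q1_var sw_restrict)
  next
    case 3
    with i K1 sw_low show ?thesis
      by (simp add: Q1_var sw_restrict)
  qed
qed

lemma Q0_restrict: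
  assumes K: "even K" "4 \<le> K" and x: "x \<in> HBSO (K - 1)"
  shows "Q0 K x = Q0 (K - 1) x"
proof (rule derivation_eqI[OF _ Q0_derivation _ x])
  show "HBSO_derivation (K - 1) (Q0 K)"
    by (rule HBSO_derivation_mono[OF _ Q0_derivation]) simp
  show "Q0 K (var i) = Q0 (K - 1) (var i)" if "2 \<le> i" "i \<le> K - 1" for i
    using K that by (rule Q0_var_restrict)
qed

lemma Q1_restrict:
  assumes K: "even K" "4 \<le> K" and x: "x \<in> HBSO (K - 1)"
  shows "Q1 K x = Q1 (K - 1) x"
proof (rule derivation_eqI[OF _ Q1_derivation _ x])
  show "HBSO_derivation (K - 1) (Q1 K)"
    by (rule HBSO_derivation_mono[OF _ Q1_derivation]) simp
  show "Q1 K (var i) = Q1 (K - 1) (var i)" if "2 \<le> i" "i \<le> K - 1" for i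
    using K that by (rule Q1_var_restrict)
qed

section \<open>Splitting off the top Stiefel--Whitney class\<close>

lemma Q0_var_top: "2 \<le> K \<Longrightarrow> Q0 K (var K) = 0"
  by (simp add: Q0_var sw_gt)

lemma Q1_var_top: "4 \<le> K \<Longrightarrow> Q1 K (var K) = var 3 * var K"
  by (simp add: Q1_var sw_gt sw_var)

lemma TQ0_eq_Q0: "TQ0 N x = Q0 N x"
  by (simp add: TQ0_def ThomSq_def sum_atMost_1 Q0_def)

lemma TQ1_eq:
  assumes N: "3 \<le> N" and x: "x \<in> HBSO N"
  shows "TQ1 N x = var 3 * x + Q1 N x"
proof -
  have Sq1x: "Sq N 1 x \<in> HBSO N"
    using x by (simp add: HBSO_Sq)
  have sw23: "sw N 2 = var 2" "sw N 3 = var 3"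
    using N by (simp_all add: sw_var)
  have index_arith: "(1::nat) - 0 = 1" "(1::nat) - 1 = 0" "(2::nat) - 0 = 2" "(2::nat) - 1 = 1"
    "(2::nat) - 2 = 0" "(3::nat) - 0 = 3" "(3::nat) - 1 = 2" "(3::nat) - 2 = 1" "(3::nat) - 3 = 0"
    by simp_all
  have "ThomSq N 1 x = Sq N 1 x"
    unfolding ThomSq_def sum_atMost_1 index_arith by simp
  moreover have "ThomSq N 3 x = x * var 3 + Sq N 1 x * var 2 + Sq N 3 x"
    unfolding ThomSq_def sum_atMost_3 index_arith using x by (simp add: Sq0_HBSO sw23)
  moreover have "ThomSq N 2 (Sq N 1 x) = Sq N 1 x * var 2 + Sq N 2 (Sq N 1 x)"
    unfolding ThomSq_def sum_atMost_2 index_arith using Sq1x by (simp add: Sq0_HBSO sw23)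
  ultimately have "TQ1 N x = (var 3 * x + Q1 N x) + (Sq N 1 x * var 2 + Sq N 1 x * var 2)"
    unfolding TQ1_def Q1_def by (simp only: algebra_simps)
  then show ?thesis
    by (simp only: zpoly_add_self add_0_right)
qed

text \<open>\<open>quot_var K p\<close> is the quotient of \<open>p\<close> by \<open>w\<^sub>K\<close>, discarding the monomials
  not divisible by \<open>w\<^sub>K\<close>, which make up the remainder \<open>rem_var K p\<close>.\<close>
definition quot_var :: "nat \<Rightarrow> zpoly \<Rightarrow> zpoly" where
  "quot_var K p = Abs_poly_mapping (\<lambda>m. Poly_Mapping.lookup p (m + Poly_Mapping.single K 1))"

definition rem_var :: "nat \<Rightarrow> zpoly \<Rightarrow> zpoly" where
  "rem_var K p = p - var K * quot_var K p"

definition split_var :: "nat \<Rightarrow> zpoly \<Rightarrow> zpoly \<times> zpoly" where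
  "split_var K p = (rem_var K p, quot_var K p)"

lemma lookup_quot_var:
  "Poly_Mapping.lookup (quot_var K p) m = Poly_Mapping.lookup p (m + Poly_Mapping.single K 1)"
proof -
  have "inj (\<lambda>m::mono. m + Poly_Mapping.single K 1)"
    by (auto simp: inj_on_def)
  then have "finite ((\<lambda>m. m + Poly_Mapping.single K 1) -` Poly_Mapping.keys p)"
    by (intro finite_vimageI) simp_all
  moreover have "{m. Poly_Mapping.lookup p (m + Poly_Mapping.single K 1) \<noteq> 0} =
      (\<lambda>m. m + Poly_Mapping.single K 1) -` Poly_Mapping.keys p"
    by (auto simp: in_keys_iff)
  ultimately show ?thesis
    by (simp add: quot_var_def)
qed

lemma single_add_eq_iff:
  "Poly_Mapping.single K 1 + m' = (m::mono) \<longleftrightarrow>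
    0 < Poly_Mapping.lookup m K \<and> m' = m - Poly_Mapping.single K 1"
proof
  assume "Poly_Mapping.single K 1 + m' = m"
  then show "0 < Poly_Mapping.lookup m K \<and> m' = m - Poly_Mapping.single K 1"
    by (auto simp: lookup_add)
next
  assume "0 < Poly_Mapping.lookup m K \<and> m' = m - Poly_Mapping.single K 1"
  then show "Poly_Mapping.single K 1 + m' = m"
    by (intro poly_mapping_eqI) (auto simp: lookup_add lookup_minus lookup_single when_def)
qed

lemma lookup_var_mult:
  "Poly_Mapping.lookup (var K * q) m =
    (if 0 < Poly_Mapping.lookup m K then Poly_Mapping.lookup q (m - Poly_Mapping.single K 1) else 0)"
proof (induction q rule: zpoly_induct)
  case (single m' c)
  show ?case
    unfolding var_def mult_single lookup_single single_add_eq_iff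
    by (cases c) (auto simp: when_def)
qed (simp_all add: distrib_left lookup_add)

lemma lookup_rem_var:
  "Poly_Mapping.lookup (rem_var K p) m =
    (if Poly_Mapping.lookup m K = 0 then Poly_Mapping.lookup p m else 0)"
proof (cases "Poly_Mapping.lookup m K = 0")
  case False
  then have "m - Poly_Mapping.single K 1 + Poly_Mapping.single K 1 = m"
    by (metis add.commute not_gr_zero single_add_eq_iff)
  with False show ?thesis
    by (simp add: rem_var_def lookup_minus lookup_var_mult lookup_quot_var)
qed (cases "Poly_Mapping.lookup p m"; simp add: rem_var_def lookup_minus lookup_var_mult)

lemma keys_rem_var:
  "Poly_Mapping.keys (rem_var K p) = {m \<in> Poly_Mapping.keys p. Poly_Mapping.lookup m K = 0}"
  by (auto simp: in_keys_iff lookup_rem_var split: if_splits)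

lemma keys_quot_var:
  "m \<in> Poly_Mapping.keys (quot_var K p) \<longleftrightarrow> m + Poly_Mapping.single K 1 \<in> Poly_Mapping.keys p"
  by (simp add: in_keys_iff lookup_quot_var)

lemma rem_var_plus_var_mult_quot_var: "rem_var K p + var K * quot_var K p = p"
  by (simp add: rem_var_def)

lemma rem_var_add: "rem_var K (p + q) = rem_var K p + rem_var K q"
  by (rule poly_mapping_eqI) (simp add: lookup_rem_var lookup_add)

lemma quot_var_add: "quot_var K (p + q) = quot_var K p + quot_var K q"
  by (rule poly_mapping_eqI) (simp add: lookup_quot_var lookup_add)

lemma quot_var_var_mult: "quot_var K (var K * q) = q"
  by (rule poly_mapping_eqI) (simp add: lookup_quot_var lookup_var_mult lookup_add)

lemma split_var_add: "split_var K (p + q) = (fst (split_var K p) + fst (split_var K q),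
    snd (split_var K p) + snd (split_var K q))"
  by (simp add: split_var_def rem_var_add quot_var_add)

lemma quot_var_eq_0:
  assumes "1 \<le> K" "a \<in> HBSO (K - 1)"
  shows "quot_var K a = 0"
proof (rule poly_mapping_eqI)
  fix m :: mono
  have "K \<in> Poly_Mapping.keys (m + Poly_Mapping.single K 1)"
    unfolding in_keys_iff lookup_add lookup_single_eq by linarith
  with assms have "m + Poly_Mapping.single K 1 \<notin> Poly_Mapping.keys a"
    unfolding HBSO_iff by fastforce
  then show "Poly_Mapping.lookup (quot_var K a) m = Poly_Mapping.lookup 0 m"
    by (simp add: lookup_quot_var in_keys_iff)
qed

lemma split_var_eq:
  assumes "1 \<le> K" "a \<in> HBSO (K - 1)"
  shows "split_var K (a + var K * b) = (a, b)"
proof -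
  have "quot_var K (a + var K * b) = b"
    using quot_var_eq_0[OF assms] by (simp add: quot_var_add quot_var_var_mult)
  then show ?thesis
    by (simp add: split_var_def rem_var_def)
qed

lemma rem_var_in_rHBSO:
  assumes x: "x \<in> rHBSO K"
  shows "rem_var K x \<in> rHBSO (K - 1)"
proof -
  have "Poly_Mapping.keys m \<subseteq> {2..K - 1}" if "m \<in> Poly_Mapping.keys (rem_var K x)" for m
  proof
    fix i
    assume i: "i \<in> Poly_Mapping.keys m"
    from that x have "Poly_Mapping.keys m \<subseteq> {2..K}" "K \<notin> Poly_Mapping.keys m"
      by (auto simp: keys_rem_var rHBSO_def HBSO_iff in_keys_iff)
    with i have "2 \<le> i" "i \<le> K" "i \<noteq> K"
      by auto
    then show "i \<in> {2..K - 1}"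
      by simp
  qed
  then have "rem_var K x \<in> HBSO (K - 1)"
    by (simp add: HBSO_iff)
  moreover have "0 \<notin> Poly_Mapping.keys (rem_var K x)"
    using x by (simp add: keys_rem_var rHBSO_def)
  ultimately show ?thesis
    by (simp add: rHBSO_def)
qed

lemma rHBSO_subset: "rHBSO K \<subseteq> HBSO K"
  by (auto simp: rHBSO_def)

lemma quot_var_in_HBSO: "x \<in> HBSO K \<Longrightarrow> quot_var K x \<in> HBSO K"
  by (metis (no_types, lifting) HBSO_iff keys_add_mono keys_quot_var le_sup_iff)

lemma add_var_mult_in_rHBSO:
  assumes K: "2 \<le> K" and a: "a \<in> rHBSO (K - 1)" and b: "b \<in> HBSO K"
  shows "a + var K * b \<in> rHBSO K"
proof -
  have "a \<in> HBSO K"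
    using a HBSO_mono[of "K - 1" K] by (auto simp: rHBSO_def)
  with K b have "a + var K * b \<in> HBSO K"
    by (intro HBSO_add HBSO_mult HBSO_var) simp_all
  moreover have "Poly_Mapping.lookup (a + var K * b) 0 = 0"
    using a by (simp add: lookup_add lookup_var_mult rHBSO_def in_keys_iff)
  ultimately show ?thesis
    by (simp add: rHBSO_def in_keys_iff)
qed

lemma bij_betw_split_var:
  assumes K: "2 \<le> K"
  shows "bij_betw (split_var K) (rHBSO K) (rHBSO (K - 1) \<times> HBSO K)"
proof (rule bij_betw_byWitness[where f' = "\<lambda>(a, b). a + var K * b"])
  show "\<forall>x\<in>rHBSO K. (\<lambda>(a, b). a + var K * b) (split_var K x) = x"
    by (simp add: split_var_def rem_var_plus_var_mult_quot_var)
  show "\<forall>y\<in>rHBSO (K - 1) \<times> HBSO K. split_var K ((\<lambda>(a, b). a + var K * b) y) = y"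
    using K by (auto simp: rHBSO_def split_var_eq)
  show "split_var K ` rHBSO K \<subseteq> rHBSO (K - 1) \<times> HBSO K"
    using rHBSO_subset by (auto simp: split_var_def rem_var_in_rHBSO intro!: quot_var_in_HBSO)
  show "(\<lambda>(a, b). a + var K * b) ` (rHBSO (K - 1) \<times> HBSO K) \<subseteq> rHBSO K"
    using K by (auto intro: add_var_mult_in_rHBSO)
qed

lemma homog_rem_var: "homog d x \<Longrightarrow> homog d (rem_var K x)"
  by (simp add: homog_def keys_rem_var)

lemma homog_quot_var:
  assumes "homog d x"
  shows "quot_var K x = 0 \<or> (K \<le> d \<and> homog (d - K) (quot_var K x))"
proof -
  have deg: "mdeg m + K = d" if "m \<in> Poly_Mapping.keys (quot_var K x)" for m
    using that assms by (auto simp: keys_quot_var homog_def mdeg_add)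
  then show ?thesis
    by (metis (no_types, lifting) add_diff_cancel_right' all_not_in_conv homog_def keys_eq_empty
        le_add2)
qed

lemma derivation_split_var:
  assumes D: "HBSO_derivation K D" and K: "2 \<le> K" and x: "x \<in> HBSO K"
  shows "D x = D (rem_var K x) + var K * D (quot_var K x) + D (var K) * quot_var K x"
proof -
  have "D x = D (rem_var K x + var K * quot_var K x)"
    by (simp add: rem_var_plus_var_mult_quot_var)
  also have "\<dots> = D (rem_var K x) + (D (var K) * quot_var K x + var K * D (quot_var K x))"
    using K x by (simp add: derivation_add[OF D] derivation_mult_homog_left[OF D homog_var]
        HBSO_var quot_var_in_HBSO)
  finally show ?thesis
    by (simp add: algebra_simps)
qed

lemma split_var_Q0:
  assumes K: "even K" "4 \<le> K" and x: "x \<in> rHBSO K"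
  shows "split_var K (Q0 K x) = (Q0 (K - 1) (fst (split_var K x)), TQ0 K (snd (split_var K x)))"
proof -
  have rem: "rem_var K x \<in> HBSO (K - 1)"
    using rem_var_in_rHBSO[OF x] by (simp add: rHBSO_def)
  have "Q0 K x = Q0 (K - 1) (rem_var K x) + var K * TQ0 K (quot_var K x)"
    using derivation_split_var[OF Q0_derivation, of K x] Q0_restrict[OF K rem] K x
    by (simp add: Q0_var_top TQ0_eq_Q0 rHBSO_def)
  moreover have "Q0 (K - 1) (rem_var K x) \<in> HBSO (K - 1)"
    using rem by (simp add: Q0_def HBSO_Sq)
  ultimately have "split_var K (Q0 K x) = (Q0 (K - 1) (rem_var K x), TQ0 K (quot_var K x))"
    using K by (simp add: split_var_eq)
  then show ?thesis
    by (simp add: split_var_def)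
qed

lemma split_var_Q1:
  assumes K: "even K" "4 \<le> K" and x: "x \<in> rHBSO K"
  shows "split_var K (Q1 K x) = (Q1 (K - 1) (fst (split_var K x)), TQ1 K (snd (split_var K x)))"
proof -
  have rem: "rem_var K x \<in> HBSO (K - 1)" and quot: "quot_var K x \<in> HBSO K"
    using rem_var_in_rHBSO[OF x] x by (simp_all add: rHBSO_def quot_var_in_HBSO)
  have "Q1 K x = Q1 (K - 1) (rem_var K x) + var K * TQ1 K (quot_var K x)"
    using derivation_split_var[OF Q1_derivation, of K x] Q1_restrict[OF K rem] K x quot
    by (simp add: Q1_var_top TQ1_eq rHBSO_def algebra_simps)
  moreover have "Q1 (K - 1) (rem_var K x) \<in> HBSO (K - 1)"
    using rem by (simp add: Q1_def HBSO_Sq HBSO_add)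
  ultimately have "split_var K (Q1 K x) = (Q1 (K - 1) (rem_var K x), TQ1 K (quot_var K x))"
    using K by (simp add: split_var_eq)
  then show ?thesis
    by (simp add: split_var_def)
qed

theorem lemma2:
  fixes n :: nat
  assumes "n \<ge> 2"
  shows "\<exists>f :: zpoly \<Rightarrow> zpoly \<times> zpoly.
    bij_betw f (rHBSO (2*n)) (rHBSO (2*n - 1) \<times> HBSO (2*n))
    \<and> (\<forall>x\<in>rHBSO (2*n). \<forall>y\<in>rHBSO (2*n).
          f (x + y) = (fst (f x) + fst (f y), snd (f x) + snd (f y)))
    \<and> (\<forall>x\<in>rHBSO (2*n).
          f (Q0 (2*n) x) = (Q0 (2*n - 1) (fst (f x)), TQ0 (2*n) (snd (f x))))
    \<and> (\<forall>x\<in>rHBSO (2*n).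
          f (Q1 (2*n) x) = (Q1 (2*n - 1) (fst (f x)), TQ1 (2*n) (snd (f x))))
    \<and> (\<forall>d. \<forall>x\<in>rHBSO (2*n). homog d x \<longrightarrow>
          homog d (fst (f x)) \<and> (snd (f x) = 0 \<or> (2*n \<le> d \<and> homog (d - 2*n) (snd (f x)))))"
proof (intro exI[of _ "split_var (2 * n)"] conjI ballI allI impI)
  have K: "even (2 * n)" "4 \<le> 2 * n"
    using assms by simp_all
  show "bij_betw (split_var (2 * n)) (rHBSO (2 * n)) (rHBSO (2 * n - 1) \<times> HBSO (2 * n))"
    using K by (intro bij_betw_split_var) simp
  show "split_var (2 * n) (Q0 (2 * n) x) =
      (Q0 (2 * n - 1) (fst (split_var (2 * n) x)), TQ0 (2 * n) (snd (split_var (2 * n) x)))"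
    if "x \<in> rHBSO (2 * n)" for x
    using K that by (rule split_var_Q0)
  show "split_var (2 * n) (Q1 (2 * n) x) =
      (Q1 (2 * n - 1) (fst (split_var (2 * n) x)), TQ1 (2 * n) (snd (split_var (2 * n) x)))"
    if "x \<in> rHBSO (2 * n)" for x
    using K that by (rule split_var_Q1)
qed (simp_all add: split_var_add split_var_def rem_var_add quot_var_add homog_rem_var homog_quot_var)

end
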